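(* Let $0<\alpha\le 8$, let $\mathcal{D}$ be a distribution on $[0,1]$ with mean $\theta_i$, let $\theta\in(0,1)$ and $\Delta_i=|\theta_i-\theta|$. Let $X_{i,1},X_{i,2},\dots$ be i.i.d. from $\mathcal{D}$, $\hat\Delta_{i,t}=|\frac1t\sum_{s=1}^tX_{i,s}-\theta|$ and $\xi_{i,t}=\alpha t\hat\Delta_{i,t}^2+0.5\ln t$. For $C>0$ let $\tau_{i,C}$ be the smallest positive integer $t$ with $\xi_{i,t}>C$. Then: (a) $\tau_{i,C}\le 2\exp(2C)$; (b) if $C>\ln\Delta_i^{-1}$, then for every $k\ge1$, \[ \Pr\Big(\tau_{i,C}>\frac{40}{\alpha}\cdot\frac{C-\ln\Delta_i^{-1}+k}{\Delta_i^2}\Big)\le 2\exp(-40k/\alpha). \]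
   Context: Use the convention $\ln(1/0)=+\infty$ (so (b) is vacuous when $\Delta_i=0$). *)

theory Defs
  imports "HOL-Probability.Probability"
begin

definition hatDelta :: "real \<Rightarrow> (nat \<Rightarrow> real) \<Rightarrow> nat \<Rightarrow> real" where
  "hatDelta \<theta> x t = \<bar>(\<Sum>s=1..t. x s) / real t - \<theta>\<bar>"

definition xi :: "real \<Rightarrow> real \<Rightarrow> (nat \<Rightarrow> real) \<Rightarrow> nat \<Rightarrow> real" where
  "xi \<alpha> \<theta> x t = \<alpha> * real t * (hatDelta \<theta> x t)\<^sup>2 + 0.5 * ln (real t)"

definition tau :: "real \<Rightarrow> real \<Rightarrow> real \<Rightarrow> (nat \<Rightarrow> real) \<Rightarrow> nat" where
  "tau \<alpha> \<theta> C x = (LEAST t::nat. 0 < t \<and> xi \<alpha> \<theta> x t > C)"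

end

theory Submission
  imports Defs
begin

lemma tau_le_if_xi_gt:
  assumes "0 < m" "C < xi \<alpha> \<theta> x m"
  shows "tau \<alpha> \<theta> C x \<le> m"
  unfolding tau_def using assms by (intro Least_le) simp

lemma xi_le_if_less_tau:
  assumes "0 < n" "n < tau \<alpha> \<theta> C x"
  shows "xi \<alpha> \<theta> x n \<le> C"
  using not_less_Least[OF assms(2)[unfolded tau_def]] assms(1) by auto

text \<open>Part (a): the term 0.5 ln t alone exceeds C as soon as t > exp (2 C).\<close>

lemma tau_le_two_exp:
  assumes "0 \<le> \<alpha>" "0 \<le> C"
  shows "real (tau \<alpha> \<theta> C x) \<le> 2 * exp (2 * C)"
proof -
  define m where "m = nat \<lfloor>exp (2 * C)\<rfloor> + 1"
  have "0 \<le> \<lfloor>exp (2 * C)\<rfloor>"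
    by simp
  then have m_gt: "exp (2 * C) < real m" and m_le: "real m \<le> exp (2 * C) + 1"
    unfolding m_def by linarith+
  have "2 * C < ln (real m)"
    using m_gt by (metis exp_gt_zero ln_exp ln_less_cancel_iff order.strict_trans)
  moreover have "0 \<le> \<alpha> * real m * (hatDelta \<theta> x m)\<^sup>2"
    using assms by simp
  ultimately have "C < xi \<alpha> \<theta> x m"
    unfolding xi_def by simp
  then have "tau \<alpha> \<theta> C x \<le> m"
    by (rule tau_le_if_xi_gt[rotated]) (simp add: m_def)
  then have "real (tau \<alpha> \<theta> C x) \<le> real m"
    by simp
  also have "\<dots> \<le> 2 * exp (2 * C)"
    using m_le assms(2) by (smt (verit) one_le_exp_iff)
  finally show ?thesis .
qed

lemma five_abs_less_if_quadratic_bounds: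
  fixes a h \<Delta> L k :: real
  assumes "0 \<le> a" "0 < k" "0 < \<Delta>"
    and upper: "a * h\<^sup>2 \<le> L" and lower: "32 * (L + k) \<le> a * \<Delta>\<^sup>2"
  shows "5 * \<bar>h\<bar> < \<Delta>"
proof -
  have "0 \<le> L"
    using upper assms(1) by (smt (verit) zero_le_mult_iff zero_le_power2)
  have "32 * (L + k) * h\<^sup>2 \<le> (a * h\<^sup>2) * \<Delta>\<^sup>2"
    using mult_right_mono[OF lower zero_le_power2[of h]] by (simp add: algebra_simps)
  also have "\<dots> \<le> L * \<Delta>\<^sup>2"
    using upper by (simp add: mult_right_mono)
  also have "\<dots> < (L + k) * \<Delta>\<^sup>2"
    using assms(2,3) by simp
  finally have "(L + k) * (32 * h\<^sup>2) < (L + k) * \<Delta>\<^sup>2"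
    by (simp add: algebra_simps)
  then have "32 * h\<^sup>2 < \<Delta>\<^sup>2"
    using \<open>0 \<le> L\<close> assms(2) by (simp add: mult_less_cancel_left_pos)
  then have "25 * h\<^sup>2 < \<Delta>\<^sup>2"
    using zero_le_power2[of h] by linarith
  then have "(5 * \<bar>h\<bar>)\<^sup>2 < \<Delta>\<^sup>2"
    by (simp add: power_mult_distrib)
  then show ?thesis
    by (rule power2_less_imp_less) (use assms(3) in simp)
qed

text \<open>Before tau we have xi n \<le> C; once n \<Delta>^2 \<ge> 1 the term 0.5 ln n already uses up ln (1/\<Delta>)
  of C, and the remaining budget forces the empirical mean to within \<Delta>/5 of \<theta>, hence to distance
  at least 4\<Delta>/5 from \<mu>.\<close>

lemma sample_mean_far_if_less_tau:
  fixes x :: "nat \<Rightarrow> real"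
  assumes "0 < \<alpha>" "0 < k" "0 < n" "n < tau \<alpha> \<theta> C x"
    and \<Delta>: "\<Delta> = \<bar>\<mu> - \<theta>\<bar>" "0 < \<Delta>"
    and n_large: "1 \<le> real n * \<Delta>\<^sup>2" "32 * (C - ln (1 / \<Delta>) + k) \<le> \<alpha> * real n * \<Delta>\<^sup>2"
  shows "4 * \<Delta> / 5 \<le> \<bar>(\<Sum>s=1..n. x s) / real n - \<mu>\<bar>"
proof -
  define h where "h = hatDelta \<theta> x n"
  have "1 / \<Delta>\<^sup>2 \<le> real n"
    using n_large(1) \<Delta>(2) by (simp add: field_simps)
  then have "ln (1 / \<Delta>\<^sup>2) \<le> ln (real n)"
    using \<Delta>(2) assms(3) by (subst ln_le_cancel_iff) auto
  then have "2 * ln (1 / \<Delta>) \<le> ln (real n)"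
    using \<Delta>(2) by (simp add: ln_div ln_realpow)
  moreover have "\<alpha> * real n * h\<^sup>2 + 0.5 * ln (real n) \<le> C"
    using xi_le_if_less_tau[OF assms(3,4)] unfolding xi_def h_def .
  ultimately have "\<alpha> * real n * h\<^sup>2 \<le> C - ln (1 / \<Delta>)"
    by linarith
  then have "5 * \<bar>h\<bar> < \<Delta>"
    using five_abs_less_if_quadratic_bounds[where a = "\<alpha> * real n" and L = "C - ln (1 / \<Delta>)"]
      assms(1,2) \<Delta>(2) n_large(2) by simp
  moreover define m where "m = (\<Sum>s=1..n. x s) / real n"
  ultimately have "5 * \<bar>m - \<theta>\<bar> < \<Delta>"
    unfolding h_def hatDelta_def by simp
  then show ?thesis
    unfolding m_def[symmetric] using \<Delta>(1) by (cases "m \<le> \<mu>"; cases "m \<le> \<theta>"; cases "\<mu> \<le> \<theta>") auto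
qed

lemma nat_floor_mult_square_ge:
  fixes T \<Delta> :: real
  assumes "5 \<le> T * \<Delta>\<^sup>2" "\<Delta>\<^sup>2 \<le> 1"
  shows "4 * (T * \<Delta>\<^sup>2) / 5 \<le> real (nat \<lfloor>T\<rfloor>) * \<Delta>\<^sup>2"
proof -
  have "0 \<le> T"
    using assms(1) by (smt (verit) mult_nonpos_nonneg zero_le_power2)
  have "T * \<Delta>\<^sup>2 \<le> T"
    using assms(2) \<open>0 \<le> T\<close> by (rule mult_left_le)
  then have "4 * T / 5 \<le> real (nat \<lfloor>T\<rfloor>)"
    using assms(1) by linarith
  then have "4 * T / 5 * \<Delta>\<^sup>2 \<le> real (nat \<lfloor>T\<rfloor>) * \<Delta>\<^sup>2"
    by (rule mult_right_mono) simp
  then show ?thesis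
    by simp
qed

text \<open>Where the constant 40 comes from: n = \<lfloor>T\<rfloor> \<ge> 4T/5 gives \<alpha> n \<Delta>^2 \<ge> 32 (L + k), and (32/25) 32 > 40.\<close>

lemma nat_floor_threshold_bounds:
  fixes \<alpha> \<Delta> L k :: real
  assumes \<alpha>: "0 < \<alpha>" "\<alpha> \<le> 8" and \<Delta>: "0 < \<Delta>" "\<Delta> \<le> 1" and L: "0 < L" and k: "1 \<le> k"
  defines "T \<equiv> 40 / \<alpha> * ((L + k) / \<Delta>\<^sup>2)"
  shows "real (nat \<lfloor>T\<rfloor>) \<le> T" "1 \<le> real (nat \<lfloor>T\<rfloor>) * \<Delta>\<^sup>2"
    "32 * (L + k) \<le> \<alpha> * real (nat \<lfloor>T\<rfloor>) * \<Delta>\<^sup>2"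
    "40 * k / \<alpha> \<le> 32 / 25 * (real (nat \<lfloor>T\<rfloor>) * \<Delta>\<^sup>2)"
proof -
  have T\<Delta>: "T * \<Delta>\<^sup>2 = 40 * (L + k) / \<alpha>"
    using \<alpha>(1) \<Delta>(1) unfolding T_def by (simp add: field_simps)
  have "0 < T"
    unfolding T_def using \<alpha>(1) \<Delta>(1) L k by simp
  then show "real (nat \<lfloor>T\<rfloor>) \<le> T"
    by linarith
  have "5 \<le> T * \<Delta>\<^sup>2"
    unfolding T\<Delta> using L k \<alpha> by (simp add: field_simps)
  moreover have "\<Delta>\<^sup>2 \<le> 1"
    using \<Delta> by (simp add: power_le_one)
  ultimately have "4 * (T * \<Delta>\<^sup>2) / 5 \<le> real (nat \<lfloor>T\<rfloor>) * \<Delta>\<^sup>2"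
    by (rule nat_floor_mult_square_ge)
  then have n\<Delta>: "32 * (L + k) / \<alpha> \<le> real (nat \<lfloor>T\<rfloor>) * \<Delta>\<^sup>2"
    unfolding T\<Delta> using \<alpha>(1) by (simp add: field_simps)
  moreover have "4 \<le> 32 * (L + k) / \<alpha>"
    using L k \<alpha> by (simp add: field_simps)
  ultimately show "1 \<le> real (nat \<lfloor>T\<rfloor>) * \<Delta>\<^sup>2"
    by linarith
  show "32 * (L + k) \<le> \<alpha> * real (nat \<lfloor>T\<rfloor>) * \<Delta>\<^sup>2"
    using n\<Delta> \<alpha>(1) by (simp add: pos_divide_le_eq ac_simps)
  have "40 * k / \<alpha> \<le> 32 / 25 * (32 * (L + k) / \<alpha>)"
    using \<alpha> L k by (simp add: field_simps)
  then show "40 * k / \<alpha> \<le> 32 / 25 * (real (nat \<lfloor>T\<rfloor>) * \<Delta>\<^sup>2)"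
    using n\<Delta> by linarith
qed

context prob_space
begin

lemma expectation_in_interval:
  fixes f :: "'a \<Rightarrow> real"
  assumes "random_variable borel f" "AE \<omega> in M. f \<omega> \<in> {a..b}"
  shows "expectation f \<in> {a..b}"
proof -
  interpret interval_bounded_random_variable M f a b
    using assms by unfold_locales
  have "expectation (\<lambda>_. a) \<le> expectation f"
    using AE_in_interval by (intro integral_mono_AE) (auto elim!: eventually_mono)
  moreover have "expectation f \<le> expectation (\<lambda>_. b)"
    using AE_in_interval by (intro integral_mono_AE) (auto elim!: eventually_mono)
  ultimately show ?thesis
    by (simp add: prob_space)
qed

lemma sample_mean_deviation_le:
  assumes indep: "indep_vars (\<lambda>_. borel) X UNIV"
    and ident: "\<And>s. distr M borel (X s) = distr M borel (X 0)"
    and bounded: "AE \<omega> in M. X 0 \<omega> \<in> {0..1}"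
    and "0 < n" "0 \<le> \<epsilon>"
  shows "prob {\<omega> \<in> space M. \<epsilon> \<le> \<bar>(\<Sum>s=1..n. X s \<omega>) / real n - expectation (X 0)\<bar>}
           \<le> 2 * exp (- 2 * real n * \<epsilon>\<^sup>2)"
proof -
  interpret Hoeffding_ineq_iid M "{1..n}" X "X 0" 0 1 "expectation (X 0)"
  proof unfold_locales
    show "indep_vars (\<lambda>_. borel) X {1..n}"
      using indep by (rule indep_vars_subset) simp
    show "random_variable borel (X 0)"
      using indep unfolding indep_vars_def by blast
  qed (use ident bounded in auto)
  show ?thesis
    using Hoeffding_ineq_abs_ge'[of \<epsilon>] assms(4,5) by simp
qed

text \<open>For n = \<lfloor>T\<rfloor> with T the threshold, the event tau > T forces the mean of the first n
  samples to deviate from the true mean by 4\<Delta>/5, which Hoeffding bounds by 2 exp (-(32/25) n \<Delta>^2).\<close>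

lemma tau_tail_bound:
  assumes indep: "indep_vars (\<lambda>_. borel) X UNIV"
    and ident: "\<And>s. distr M borel (X s) = distr M borel (X 0)"
    and bounded: "AE \<omega> in M. X 0 \<omega> \<in> {0..1}"
    and \<alpha>: "0 < \<alpha>" "\<alpha> \<le> 8"
    and \<Delta>: "\<Delta> = \<bar>expectation (X 0) - \<theta>\<bar>" "0 < \<Delta>" "\<Delta> \<le> 1"
    and C: "ln (1 / \<Delta>) < C" and k: "1 \<le> k"
  shows "prob {\<omega> \<in> space M. 40 / \<alpha> * ((C - ln (1 / \<Delta>) + k) / \<Delta>\<^sup>2) < real (tau \<alpha> \<theta> C (\<lambda>s. X s \<omega>))}
           \<le> 2 * exp (- 40 * k / \<alpha>)"
proof -
  have [measurable]: "random_variable borel (X s)" for s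
    using indep unfolding indep_vars_def by blast
  define T where "T = 40 / \<alpha> * ((C - ln (1 / \<Delta>) + k) / \<Delta>\<^sup>2)"
  define n where "n = nat \<lfloor>T\<rfloor>"
  define \<epsilon> where "\<epsilon> = 4 * \<Delta> / 5"
  have "0 < C - ln (1 / \<Delta>)"
    using C by simp
  note n = nat_floor_threshold_bounds[OF \<alpha> \<Delta>(2,3) this k, folded T_def n_def]
  have "0 < n"
    using n(2) by (cases n) auto
  have "{\<omega> \<in> space M. T < real (tau \<alpha> \<theta> C (\<lambda>s. X s \<omega>))}
          \<subseteq> {\<omega> \<in> space M. \<epsilon> \<le> \<bar>(\<Sum>s=1..n. X s \<omega>) / real n - expectation (X 0)\<bar>}"
  proof safe
    fix \<omega>
    assume "T < real (tau \<alpha> \<theta> C (\<lambda>s. X s \<omega>))"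
    then have "n < tau \<alpha> \<theta> C (\<lambda>s. X s \<omega>)"
      using n(1) by linarith
    from sample_mean_far_if_less_tau[OF \<alpha>(1) _ \<open>0 < n\<close> this \<Delta>(1,2) n(2,3)] k
    show "\<epsilon> \<le> \<bar>(\<Sum>s=1..n. X s \<omega>) / real n - expectation (X 0)\<bar>"
      unfolding \<epsilon>_def by simp
  qed
  then have "prob {\<omega> \<in> space M. T < real (tau \<alpha> \<theta> C (\<lambda>s. X s \<omega>))}
      \<le> prob {\<omega> \<in> space M. \<epsilon> \<le> \<bar>(\<Sum>s=1..n. X s \<omega>) / real n - expectation (X 0)\<bar>}"
    by (rule finite_measure_mono) measurable
  also have "\<dots> \<le> 2 * exp (- 2 * real n * \<epsilon>\<^sup>2)"
    using \<Delta>(2) by (intro sample_mean_deviation_le[OF indep ident bounded \<open>0 < n\<close>]) (simp add: \<epsilon>_def)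
  also have "- 2 * real n * \<epsilon>\<^sup>2 = - (32 / 25 * (real n * \<Delta>\<^sup>2))"
    unfolding \<epsilon>_def by (simp add: power2_eq_square)
  also have "2 * exp \<dots> \<le> 2 * exp (- 40 * k / \<alpha>)"
    using n(4) by simp
  finally show ?thesis
    unfolding T_def .
qed

end

theorem lemma7:
  fixes M :: "'a measure" and D :: "real measure"
    and X :: "nat \<Rightarrow> 'a \<Rightarrow> real"
    and \<alpha> \<theta> \<theta>i \<Delta>i C :: real
  assumes "prob_space M"
    and D_prob: "prob_space D" and D_sets: "sets D = sets borel"
    and D_supp: "measure D {0..1} = 1"
    and mean: "\<theta>i = (\<integral>x. x \<partial>D)"
    and indep: "prob_space.indep_vars M (\<lambda>_. borel) X UNIV"
    and distr: "\<And>s. distr M borel (X s) = D"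
    and alpha: "0 < \<alpha>" "\<alpha> \<le> 8"
    and theta: "0 < \<theta>" "\<theta> < 1"
    and Delta: "\<Delta>i = \<bar>\<theta>i - \<theta>\<bar>"
    and C: "0 < C"
  shows "(\<forall>\<omega>\<in>space M. real (tau \<alpha> \<theta> C (\<lambda>s. X s \<omega>)) \<le> 2 * exp (2 * C))
       \<and> ((\<Delta>i > 0 \<and> C > ln (1 / \<Delta>i)) \<longrightarrow>
          (\<forall>k::real. k \<ge> 1 \<longrightarrow>
             measure M {\<omega> \<in> space M. real (tau \<alpha> \<theta> C (\<lambda>s. X s \<omega>))
                 > (40 / \<alpha>) * ((C - ln (1 / \<Delta>i) + k) / \<Delta>i\<^sup>2)}
             \<le> 2 * exp (- 40 * k / \<alpha>)))"
proof -
  interpret prob_space M by fact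
  have rv: "random_variable borel (X 0)"
    using indep unfolding indep_vars_def by blast
  have "AE x in D. x \<in> {0..1}"
    using prob_space.AE_prob_1[OF D_prob D_supp] .
  then have bounded: "AE \<omega> in M. X 0 \<omega> \<in> {0..1}"
    using rv by (subst (asm) distr[symmetric, of 0]) (simp add: AE_distr_iff)
  have expectation: "expectation (X 0) = \<theta>i"
    unfolding mean distr[symmetric, of 0] using rv by (simp add: integral_distr)
  have "\<theta>i \<in> {0..1}"
    using expectation_in_interval[OF rv bounded] by (simp add: expectation)
  then have "\<Delta>i \<le> 1"
    using Delta theta by auto
  show ?thesis
    using tau_le_two_exp[of \<alpha> C] tau_tail_bound[OF indep _ bounded alpha _ _ \<open>\<Delta>i \<le> 1\<close>] alpha C
    by (auto simp: distr expectation Delta)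
qed

end
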